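(* Let $(N,p)$ be a majorant of a second-order polynomial $P$. Define $p_i\colon\mathbb N^{\mathbb N}\times\mathbb N\to\mathbb N$ recursively by $p_0(l,n)=p(n)$ and $p_{i+1}(l,n)=p(\max\{n,l(p_i(l,n))\})$. Then for every monotone $l\colon\mathbb N\to\mathbb N$ and every $n\in\mathbb N$, $P(l,n)\le p_N(l,n)$.
   Context: Second-order polynomials are the smallest class of functions $P\colon\mathbb N^{\mathbb N}\times\mathbb N\to\mathbb N$ that contains all $(l,n)\mapsto p(n)$ for polynomials $p$ with natural-number coefficients, and is closed under pointwise sum, pointwise product, and $P\mapsto P^+$ with $P^+(l,n)=l(P(l,n))$. A polynomial tree is a finite rooted tree in which each node is labeled by a polynomial in $\mathbb N[X_0,\ldots,X_k]$, $k$ being the number of children of that node, with the children of each node linearly ordered. Recursively assign functions to nodes: a leaf labeled $t$ gets $(l,n)\mapsto t(n)$; a node labeled $t$ with children (in order) assigned $P_1,\ldots,P_k$ gets $(l,n)\mapsto t(n,l(P_1(l,n)),\ldots,l(P_k(l,n)))$. The tree is a description of $P$ if $P$ is assigned to the root. A pair $(N,p)$ with $N\in\mathbb N$ and $p\colon\mathbb N\to\mathbb N$ is a majorant of $P$ if $p(n)\ge n$ for all $n$ and there is a description $T$ of $P$ such that $N$ is the height of $T$ (a single-node tree has height $0$) and for every $n$ and every node $t$ of $T$, $p(n)\ge t(n,\ldots,n)$. *)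

theory Defs
  imports Main
begin

datatype npoly = PConst nat | PVar nat | PAdd npoly npoly | PMul npoly npoly

fun peval :: "npoly \<Rightarrow> (nat \<Rightarrow> nat) \<Rightarrow> nat" where
  "peval (PConst c) v = c"
| "peval (PVar i) v = v i"
| "peval (PAdd a b) v = peval a v + peval b v"
| "peval (PMul a b) v = peval a v * peval b v"

fun pvars :: "npoly \<Rightarrow> nat set" where
  "pvars (PConst c) = {}"
| "pvars (PVar i) = {i}"
| "pvars (PAdd a b) = pvars a \<union> pvars b"
| "pvars (PMul a b) = pvars a \<union> pvars b"

definition poly_in :: "nat \<Rightarrow> npoly \<Rightarrow> bool" where
  "poly_in k t \<longleftrightarrow> pvars t \<subseteq> {..k}"

inductive_set second_order_poly :: "((nat \<Rightarrow> nat) \<Rightarrow> nat \<Rightarrow> nat) set" where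
  sop_poly: "poly_in 0 q \<Longrightarrow> (\<lambda>l n. peval q (\<lambda>_. n)) \<in> second_order_poly"
| sop_add: "P \<in> second_order_poly \<Longrightarrow> Q \<in> second_order_poly \<Longrightarrow>
      (\<lambda>l n. P l n + Q l n) \<in> second_order_poly"
| sop_mul: "P \<in> second_order_poly \<Longrightarrow> Q \<in> second_order_poly \<Longrightarrow>
      (\<lambda>l n. P l n * Q l n) \<in> second_order_poly"
| sop_plus: "P \<in> second_order_poly \<Longrightarrow> (\<lambda>l n. l (P l n)) \<in> second_order_poly"

datatype ptree = PNode npoly "ptree list"

fun ptree_wf :: "ptree \<Rightarrow> bool" where
  "ptree_wf (PNode t cs) \<longleftrightarrow> poly_in (length cs) t \<and> (\<forall>c \<in> set cs. ptree_wf c)"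

fun ptree_fun :: "ptree \<Rightarrow> (nat \<Rightarrow> nat) \<Rightarrow> nat \<Rightarrow> nat" where
  "ptree_fun (PNode t cs) l n =
     (let vs = map (\<lambda>c. l (ptree_fun c l n)) cs
      in peval t (\<lambda>i. if i = 0 then n else vs ! (i - 1)))"

fun ptree_height :: "ptree \<Rightarrow> nat" where
  "ptree_height (PNode t []) = 0"
| "ptree_height (PNode t cs) = Suc (Max (set (map ptree_height cs)))"

fun ptree_labels :: "ptree \<Rightarrow> npoly set" where
  "ptree_labels (PNode t cs) = insert t (\<Union>c \<in> set cs. ptree_labels c)"

definition is_description :: "ptree \<Rightarrow> ((nat \<Rightarrow> nat) \<Rightarrow> nat \<Rightarrow> nat) \<Rightarrow> bool" where
  "is_description T P \<longleftrightarrow> ptree_wf T \<and> ptree_fun T = P"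

definition is_majorant :: "nat \<Rightarrow> (nat \<Rightarrow> nat) \<Rightarrow> ((nat \<Rightarrow> nat) \<Rightarrow> nat \<Rightarrow> nat) \<Rightarrow> bool" where
  "is_majorant N p P \<longleftrightarrow> (\<forall>n. p n \<ge> n) \<and>
     (\<exists>T. is_description T P \<and> ptree_height T = N \<and>
          (\<forall>n. \<forall>t \<in> ptree_labels T. p n \<ge> peval t (\<lambda>_. n)))"

fun piter :: "(nat \<Rightarrow> nat) \<Rightarrow> nat \<Rightarrow> (nat \<Rightarrow> nat) \<Rightarrow> nat \<Rightarrow> nat" where
  "piter p 0 l n = p n"
| "piter p (Suc i) l n = p (max n (l (piter p i l n)))"

end

theory Submission
  imports Defs
begin

text \<open>Since \<open>p\<close> need not be monotone, a node of height at
  most \<open>i\<close> is bounded by \<open>p m\<close> with \<open>m\<close> the exact argument of the last \<open>p\<close> in \<open>piter p i l n\<close>: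
  \<open>m = n\<close> for \<open>i = 0\<close> (a leaf), and \<open>m = max n (l (piter p k l n))\<close> for \<open>i = Suc k\<close>. Every
  variable of the node label is then at most \<open>m\<close>: \<open>X\<^sub>0\<close> is \<open>n\<close>, and a child of height at
  most \<open>k\<close> contributes \<open>l (P\<^sub>j l n) \<le> l (piter p k l n)\<close> by induction and monotonicity of \<open>l\<close>.\<close>

lemma peval_mono_on_vars:
  assumes "\<And>i. i \<in> pvars t \<Longrightarrow> v i \<le> w i"
  shows "peval t v \<le> peval t w"
  using assms by (induction t) (auto intro: add_mono mult_le_mono)

lemma ptree_height_eq_0_iff: "ptree_height (PNode t cs) = 0 \<longleftrightarrow> cs = []"
  by (cases cs) auto

lemma ptree_height_child_less:
  assumes "c \<in> set cs"
  shows "ptree_height c < ptree_height (PNode t cs)"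
proof -
  obtain a cs' where cs: "cs = a # cs'" using assms by (cases cs) auto
  have "ptree_height c \<le> Max (set (map ptree_height cs))"
    using assms by (intro Max_ge) auto
  then show ?thesis unfolding cs by simp
qed

lemma ptree_fun_PNode_le:
  assumes "poly_in (length cs) t" and "n \<le> m"
    and "\<And>c. c \<in> set cs \<Longrightarrow> l (ptree_fun c l n) \<le> m"
  shows "ptree_fun (PNode t cs) l n \<le> peval t (\<lambda>_. m)"
proof -
  have "peval t (\<lambda>i. if i = 0 then n else map (\<lambda>c. l (ptree_fun c l n)) cs ! (i - 1))
        \<le> peval t (\<lambda>_. m)"
  proof (rule peval_mono_on_vars)
    fix j assume "j \<in> pvars t"
    then have "j \<le> length cs" using assms(1) by (auto simp: poly_in_def)
    then show "(if j = 0 then n else map (\<lambda>c. l (ptree_fun c l n)) cs ! (j - 1)) \<le> m"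
      using assms(2,3) by (cases j) auto
  qed
  then show ?thesis by (simp add: Let_def)
qed

lemma ptree_fun_le_piter:
  assumes "ptree_wf T" and "\<And>t m. t \<in> ptree_labels T \<Longrightarrow> peval t (\<lambda>_. m) \<le> p m"
    and "mono l" and "ptree_height T \<le> i"
  shows "ptree_fun T l n \<le> piter p i l n"
  using assms
proof (induction T arbitrary: i)
  case (PNode t cs)
  have label: "poly_in (length cs) t" using PNode.prems(1) by simp
  have label_le_p: "peval t (\<lambda>_. m) \<le> p m" for m using PNode.prems(2) by simp
  show ?case
  proof (cases i)
    case 0
    then have "cs = []" using PNode.prems(4) ptree_height_eq_0_iff by simp
    then have "ptree_fun (PNode t cs) l n \<le> peval t (\<lambda>_. n)"
      using label by (intro ptree_fun_PNode_le) auto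
    with label_le_p[of n] show ?thesis using 0 by simp
  next
    case (Suc k)
    define m where "m = max n (l (piter p k l n))"
    have "l (ptree_fun c l n) \<le> m" if c: "c \<in> set cs" for c
    proof -
      have "ptree_height c \<le> k"
        using ptree_height_child_less[OF c, of t] PNode.prems(4) Suc by simp
      moreover have "ptree_wf c" using PNode.prems(1) c by simp
      moreover have "peval t' (\<lambda>_. m') \<le> p m'" if "t' \<in> ptree_labels c" for t' m'
        using PNode.prems(2) c that by auto
      ultimately have "ptree_fun c l n \<le> piter p k l n"
        using PNode.IH[OF c] PNode.prems(3) by blast
      then have "l (ptree_fun c l n) \<le> l (piter p k l n)" by (rule monoD[OF PNode.prems(3)])
      then show ?thesis by (simp add: m_def)
    qed
    then have "ptree_fun (PNode t cs) l n \<le> peval t (\<lambda>_. m)"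
      using label by (intro ptree_fun_PNode_le) (auto simp: m_def)
    with label_le_p[of m] show ?thesis using Suc by (simp add: m_def)
  qed
qed

theorem mainTheorem5:
  fixes P :: "(nat \<Rightarrow> nat) \<Rightarrow> nat \<Rightarrow> nat" and N :: nat and p :: "nat \<Rightarrow> nat"
  assumes "P \<in> second_order_poly"
    and "is_majorant N p P"
    and "mono l"
  shows "P l n \<le> piter p N l n"
proof -
  obtain T where T: "ptree_wf T" "ptree_fun T = P" "ptree_height T = N"
    and labels: "\<And>m t. t \<in> ptree_labels T \<Longrightarrow> peval t (\<lambda>_. m) \<le> p m"
    using assms(2) unfolding is_majorant_def is_description_def by blast
  have "ptree_fun T l n \<le> piter p N l n"
    using T(1,3) labels assms(3) by (intro ptree_fun_le_piter) auto
  then show ?thesis using T(2) by simp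
qed

end
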